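(* Let $G$ be a group of order $16p$, where $p$ is an odd prime, let $P$ be a Sylow $p$-subgroup of $G$ and assume $P \trianglelefteq G$, and let $Q$ be a Sylow $2$-subgroup of $G$. Then $G = Q \ltimes P$. Moreover, if the commutator subgroup $G'$ is not a cyclic group of prime-power order (the trivial group counting as having prime-power order), then: $Q$ is nonabelian, $Q$ acts nontrivially on $P$ by conjugation, and $G' = Q' \times P$ is cyclic.
   Context: $G'=[G,G]$ denotes the commutator subgroup of $G$, and $Q'$ that of $Q$. *)

theory Defs
  imports "HOL-Algebra.Algebra"
begin

definition sylow_subgroup :: "('a, 'b) monoid_scheme \<Rightarrow> nat \<Rightarrow> 'a set \<Rightarrow> bool" where
  "sylow_subgroup G p P \<longleftrightarrow>
     subgroup P G \<and> card P = p ^ multiplicity p (order G)"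

definition internal_semidirect :: "('a, 'b) monoid_scheme \<Rightarrow> 'a set \<Rightarrow> 'a set \<Rightarrow> bool" where
  "internal_semidirect G Q N \<longleftrightarrow>
     N \<lhd> G \<and> subgroup Q G \<and> Q <#>\<^bsub>G\<^esub> N = carrier G \<and> Q \<inter> N = {\<one>\<^bsub>G\<^esub>}"

definition internal_direct :: "('a, 'b) monoid_scheme \<Rightarrow> 'a set \<Rightarrow> 'a set \<Rightarrow> 'a set \<Rightarrow> bool" where
  "internal_direct G H A B \<longleftrightarrow>
     subgroup A G \<and> subgroup B G \<and> A <#>\<^bsub>G\<^esub> B = H \<and> A \<inter> B = {\<one>\<^bsub>G\<^esub>} \<and>
     (\<forall>a\<in>A. \<forall>b\<in>B. a \<otimes>\<^bsub>G\<^esub> b = b \<otimes>\<^bsub>G\<^esub> a)"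

end

theory Submission
  imports Defs
begin

(*
  Since |Q| and |P| are coprime, Q and P meet trivially and QP = G, so G = Q |x P. The
  projection G -> Q is a homomorphism, hence G' <= Q'P. Conjugation acts on the cyclic group P
  by power maps, and these commute, so every commutator centralizes P. If Q acts trivially on P,
  then P is central and G' = Q', a cyclic 2-group; if Q is abelian and acts nontrivially, G' = P.
  In the remaining case P <= G' and G' = Q' x P, which is cyclic because Q' is cyclic of order
  prime to p.
*)

context group
begin

lemma inv_mult_cancel_left: "x \<in> carrier G \<Longrightarrow> y \<in> carrier G \<Longrightarrow> inv x \<otimes> (x \<otimes> y) = y"
  by (simp add: m_assoc[symmetric])

lemma mult_inv_cancel_left: "x \<in> carrier G \<Longrightarrow> y \<in> carrier G \<Longrightarrow> x \<otimes> (inv x \<otimes> y) = y"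
  by (simp add: m_assoc[symmetric])

lemmas group_word_simps = m_assoc inv_mult_cancel_left mult_inv_cancel_left inv_mult_group

lemma inv_commute:
  assumes "x \<in> carrier G" "y \<in> carrier G" "x \<otimes> y = y \<otimes> x"
  shows "inv x \<otimes> y = y \<otimes> inv x"
proof -
  have "inv x \<otimes> y = inv x \<otimes> (y \<otimes> x) \<otimes> inv x" using assms(1,2) by (simp add: group_word_simps)
  also have "\<dots> = inv x \<otimes> (x \<otimes> y) \<otimes> inv x" using assms(3) by simp
  also have "\<dots> = y \<otimes> inv x" using assms(1,2) by (simp add: group_word_simps)
  finally show ?thesis .
qed

lemma commute_generate:
  assumes S: "S \<subseteq> carrier G" and a: "a \<in> carrier G"
    and comm: "\<And>s. s \<in> S \<Longrightarrow> s \<otimes> a = a \<otimes> s"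
    and w: "w \<in> generate G S"
  shows "w \<otimes> a = a \<otimes> w"
  using w
proof (induction rule: generate.induct)
  case one then show ?case using a by simp
next
  case (incl h) then show ?case using comm by blast
next
  case (inv h) then show ?case using inv_commute[of h a] comm a S by auto
next
  case (eng h1 h2)
  have h: "h1 \<in> carrier G" "h2 \<in> carrier G" using eng generate_in_carrier S by auto
  have "h1 \<otimes> h2 \<otimes> a = h1 \<otimes> (a \<otimes> h2)" using eng h a by (simp add: m_assoc)
  also have "\<dots> = a \<otimes> (h1 \<otimes> h2)" using eng h a by (simp add: m_assoc[symmetric])
  finally show ?case .
qed

lemma conj_fixed_iff_commute:
  assumes "g \<in> carrier G" "x \<in> carrier G"
  shows "g \<otimes> x \<otimes> inv g = x \<longleftrightarrow> g \<otimes> x = x \<otimes> g"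
proof
  assume h: "g \<otimes> x \<otimes> inv g = x"
  have "g \<otimes> x = (g \<otimes> x \<otimes> inv g) \<otimes> g" using assms by (simp add: group_word_simps)
  then show "g \<otimes> x = x \<otimes> g" by (simp only: h)
qed (use assms in \<open>simp add: group_word_simps\<close>)

lemma derived_of_commuting_set:
  assumes H: "H \<subseteq> carrier G" and comm: "\<And>x y. x \<in> H \<Longrightarrow> y \<in> H \<Longrightarrow> x \<otimes> y = y \<otimes> x"
  shows "derived G H = {\<one>}"
proof -
  have "derived_set G H \<subseteq> {\<one>}"
  proof
    fix s assume "s \<in> derived_set G H"
    then obtain u v where uv: "u \<in> H" "v \<in> H" "s = u \<otimes> v \<otimes> inv u \<otimes> inv v" by blast
    have c: "u \<in> carrier G" "v \<in> carrier G" using uv H by auto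
    have "s = v \<otimes> u \<otimes> inv u \<otimes> inv v" using uv(3) comm[OF uv(1,2)] by simp
    also have "\<dots> = \<one>" using c by (simp add: group_word_simps)
    finally show "s \<in> {\<one>}" by simp
  qed
  then have "derived G H \<subseteq> {\<one>}" unfolding derived_def by (rule generate_subgroup_incl[OF _ triv_subgroup])
  then show ?thesis using subgroup.one_closed[OF derived_is_subgroup[OF H]] by blast
qed

lemma set_mult_subgroup_subset:
  assumes "subgroup S G" "A \<subseteq> S" "B \<subseteq> S"
  shows "A <#> B \<subseteq> S"
  using assms subgroup.m_closed unfolding set_mult_def by fastforce

lemma ord_dvd_subgroup_card:
  assumes K: "subgroup K G" and x: "x \<in> K"
  shows "ord x dvd card K"
proof -
  interpret K: group "G\<lparr>carrier := K\<rparr>" by (rule subgroup_imp_group[OF K])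
  have "x [^]\<^bsub>G\<lparr>carrier := K\<rparr>\<^esub> order (G\<lparr>carrier := K\<rparr>) = \<one>\<^bsub>G\<lparr>carrier := K\<rparr>\<^esub>"
    using x by (intro K.pow_order_eq_1) simp
  then have "x [^] card K = \<one>" by (simp add: order_def nat_pow_consistent[symmetric])
  then show ?thesis using pow_eq_id x subgroup.subset[OF K] by blast
qed

lemma generate_eq_subgroup:
  assumes K: "subgroup K G" "finite K" and b: "b \<in> K" and ord: "ord b = card K"
  shows "generate G {b} = K"
proof -
  have bc: "b \<in> carrier G" using b subgroup.subset[OF K(1)] by blast
  have sub: "generate G {b} \<subseteq> K" using generate_subgroup_incl[OF _ K(1)] b by simp
  then show ?thesis using generate_pow_card[OF bc] ord card_subset_eq[OF K(2)] by simp
qed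

lemma cyclic_subgroup_generated:
  assumes g: "g \<in> carrier G"
  shows "cyclic_group (subgroup_generated G (generate G {g}))"
proof -
  have "subgroup (generate G {g}) G" using generate_is_subgroup g by simp
  then have "generate G (carrier G \<inter> generate G {g}) = generate G {g}"
    using subgroup.carrier_subgroup_generated_subgroup by (fastforce simp: carrier_subgroup_generated)
  moreover have "carrier G \<inter> {g} = {g}" using g by blast
  ultimately have "subgroup_generated G (generate G {g}) = subgroup_generated G {g}"
    by (simp add: subgroup_generated_def)
  then show ?thesis using cyclic_group_generated by simp
qed

text \<open>If c^m = 1 and y^n = 1 for commuting c, y and coprime m, n, then c is a power of c y
  (and by symmetry so is y): take the power n a with n a \<equiv> 1 mod m.\<close>
lemma commuting_coprime_generate:
  assumes c: "c \<in> carrier G" and y: "y \<in> carrier G" and comm: "c \<otimes> y = y \<otimes> c"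
    and cm: "c [^] (m::nat) = \<one>" and yn: "y [^] (n::nat) = \<one>" and cop: "coprime m n" and n: "n \<noteq> 0"
  shows "c \<in> generate G {c \<otimes> y}"
proof -
  obtain a b where ab: "n * a = m * b + 1" using bezout_nat[OF n, of m] cop by (auto simp: ac_simps)
  have "c [^] (m * b) = \<one>" using c cm nat_pow_pow[of c m b] by simp
  then have "c [^] (n * a) = c" using c ab by (simp add: nat_pow_mult)
  moreover have "y [^] (n * a) = \<one>" using y yn nat_pow_pow[of y n a] by simp
  moreover have "(c \<otimes> y) [^] (n * a) = c [^] (n * a) \<otimes> y [^] (n * a)"
    by (rule pow_mult_distrib[OF comm c y])
  ultimately have "(c \<otimes> y) [^] (n * a) = c" using c by simp
  then have pow: "(c \<otimes> y) [^] (int (n * a)) = c" by (simp only: int_pow_int)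
  have "subgroup (generate G {c \<otimes> y}) G" using c y by (intro generate_is_subgroup) simp
  then have "(c \<otimes> y) [^] (int (n * a)) \<in> generate G {c \<otimes> y}"
    by (rule subgroup_int_pow_closed) (simp add: generate.incl)
  then show ?thesis by (simp only: pow)
qed

lemma commutator_swap:
  assumes "x \<in> carrier G" "y \<in> carrier G"
  shows "x \<otimes> y \<otimes> inv x \<otimes> inv y = inv (y \<otimes> x \<otimes> inv y \<otimes> inv x)"
  using assms by (simp add: group_word_simps)

lemma commutator_mult_right:
  assumes "x \<in> carrier G" "b \<in> carrier G"
  shows "x \<otimes> (x \<otimes> b) \<otimes> inv x \<otimes> inv (x \<otimes> b) = x \<otimes> (x \<otimes> b \<otimes> inv x \<otimes> inv b) \<otimes> inv x"
  using assms by (simp add: group_word_simps)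

lemma conj_pow:
  assumes g: "g \<in> carrier G" and x: "x \<in> carrier G"
  shows "g \<otimes> x [^] (n::nat) \<otimes> inv g = (g \<otimes> x \<otimes> inv g) [^] n"
proof (induction n)
  case (Suc n)
  have "g \<otimes> x [^] Suc n \<otimes> inv g = (g \<otimes> x [^] n \<otimes> inv g) \<otimes> (g \<otimes> x \<otimes> inv g)"
    using g x by (simp add: group_word_simps)
  then show ?case using Suc by simp
qed (use g in simp)

lemma ord_eq_prime_power_card:
  assumes D: "subgroup D G" and b: "b \<in> D" and q: "Factorial_Ring.prime (q::nat)"
    and card: "card D = q ^ Suc k" and pow: "b [^] (q ^ k) \<noteq> \<one>"
  shows "ord b = card D"
proof -
  have bc: "b \<in> carrier G" using b subgroup.subset[OF D] by blast
  have "ord b dvd q ^ Suc k" using ord_dvd_subgroup_card[OF D b] card by simp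
  then obtain i where i: "i \<le> Suc k" "ord b = q ^ i" using divides_primepow_nat[OF q] by blast
  have "\<not> i \<le> k"
  proof
    assume "i \<le> k"
    then have "ord b dvd q ^ k" using i(2) by (simp add: le_imp_power_dvd)
    then show False using pow pow_eq_id[OF bc] by simp
  qed
  then show ?thesis using i card by (simp add: le_Suc_eq)
qed

end

section \<open>Centre, centralizers and the class equation\<close>

definition group_center :: "('a, 'b) monoid_scheme \<Rightarrow> 'a set" where
  "group_center G = {z \<in> carrier G. \<forall>y\<in>carrier G. z \<otimes>\<^bsub>G\<^esub> y = y \<otimes>\<^bsub>G\<^esub> z}"

definition centralizer :: "('a, 'b) monoid_scheme \<Rightarrow> 'a \<Rightarrow> 'a set" where
  "centralizer G x = {g \<in> carrier G. g \<otimes>\<^bsub>G\<^esub> x = x \<otimes>\<^bsub>G\<^esub> g}"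

context group
begin

abbreviation conjugation :: "'a \<Rightarrow> 'a \<Rightarrow> 'a" where
  "conjugation \<equiv> (\<lambda>g. \<lambda>h \<in> carrier G. g \<otimes> h \<otimes> inv g)"

lemma group_center_subgroup: "subgroup (group_center G) G"
proof (rule subgroupI)
  show "group_center G \<subseteq> carrier G" "group_center G \<noteq> {}"
    by (auto simp: group_center_def)
next
  fix a assume "a \<in> group_center G"
  then show "inv a \<in> group_center G" by (auto simp: group_center_def inv_commute)
next
  fix a b assume a: "a \<in> group_center G" and b: "b \<in> group_center G"
  have ab: "a \<in> carrier G" "b \<in> carrier G" using a b by (auto simp: group_center_def)
  have "a \<otimes> b \<otimes> y = y \<otimes> (a \<otimes> b)" if y: "y \<in> carrier G" for y
  proof -
    have ay: "a \<otimes> y = y \<otimes> a" and "b \<otimes> y = y \<otimes> b" using a b y by (auto simp: group_center_def)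
    have "a \<otimes> b \<otimes> y = a \<otimes> (b \<otimes> y)" using ab y by (simp add: m_assoc)
    also have "\<dots> = a \<otimes> (y \<otimes> b)" using \<open>b \<otimes> y = y \<otimes> b\<close> by simp
    also have "\<dots> = a \<otimes> y \<otimes> b" using ab y by (simp add: m_assoc)
    also have "\<dots> = y \<otimes> a \<otimes> b" using ay by simp
    also have "\<dots> = y \<otimes> (a \<otimes> b)" using ab y by (simp add: m_assoc)
    finally show ?thesis .
  qed
  then show "a \<otimes> b \<in> group_center G" unfolding group_center_def using ab m_closed by blast
qed

lemma stabilizer_conjugation:
  assumes x: "x \<in> carrier G"
  shows "stabilizer G conjugation x = centralizer G x"
  using conj_fixed_iff_commute x by (auto simp: stabilizer_def centralizer_def)

lemma centralizer_subgroup: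
  assumes x: "x \<in> carrier G"
  shows "subgroup (centralizer G x) G"
  using group_action.stabilizer_subgroup[OF action_by_conjugation x] stabilizer_conjugation[OF x]
  by simp

lemma centralizer_eq_carrier_iff:
  assumes "x \<in> carrier G"
  shows "centralizer G x = carrier G \<longleftrightarrow> x \<in> group_center G"
proof
  assume C: "centralizer G x = carrier G"
  show "x \<in> group_center G" unfolding group_center_def
  proof (intro CollectI conjI ballI)
    fix y assume "y \<in> carrier G"
    then have "y \<in> centralizer G x" using C by simp
    then show "x \<otimes> y = y \<otimes> x" by (simp add: centralizer_def)
  qed (rule assms)
next
  assume "x \<in> group_center G"
  then have "g \<otimes> x = x \<otimes> g" if "g \<in> carrier G" for g
    using that by (simp add: group_center_def)
  then show "centralizer G x = carrier G" by (auto simp: centralizer_def)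
qed

lemma class_size_times_centralizer:
  assumes "x \<in> carrier G"
  shows "card (orbit G conjugation x) * card (centralizer G x) = order G"
  using group_action.orbit_stabilizer_theorem[OF action_by_conjugation assms]
    stabilizer_conjugation[OF assms] by simp

lemma class_equation_dvd:
  assumes fin: "finite (carrier G)"
    and d: "\<And>x. x \<in> carrier G \<Longrightarrow> x \<notin> group_center G \<Longrightarrow> d dvd card (orbit G conjugation x)"
  shows "d dvd card (carrier G - group_center G)"
proof -
  interpret conj: group_action G "carrier G" conjugation by (rule action_by_conjugation)
  let ?f = "\<lambda>x. if x \<notin> group_center G then 1 else (0::nat)"
  have orbit_elem: "\<exists>g\<in>carrier G. y = g \<otimes> x \<otimes> inv g" if "y \<in> orbit G conjugation x" "x \<in> carrier G" for x y
    using that by (auto simp: orbit_def)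
  have orbit_dvd: "d dvd (\<Sum>y\<in>orbit G conjugation x. ?f y)" if x: "x \<in> carrier G" for x
  proof (cases "x \<in> group_center G")
    case True
    then have "g \<otimes> x \<otimes> inv g = x" if "g \<in> carrier G" for g
      using conj_fixed_iff_commute x that by (simp add: group_center_def)
    then have "orbit G conjugation x = {x}" unfolding orbit_def using x one_closed by force
    then show ?thesis using True by simp
  next
    case False
    have "y \<notin> group_center G" if y: "y \<in> orbit G conjugation x" for y
    proof
      assume yz: "y \<in> group_center G"
      obtain g where g: "g \<in> carrier G" "y = g \<otimes> x \<otimes> inv g" using orbit_elem[OF y x] by blast
      then have "x = inv g \<otimes> y \<otimes> g" using x by (simp add: group_word_simps)
      also have "\<dots> = y" using yz g by (simp add: group_center_def group_word_simps)
      finally show False using yz False by simp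
    qed
    then have "(\<Sum>y\<in>orbit G conjugation x. ?f y) = card (orbit G conjugation x)" by simp
    then show ?thesis using d[OF x False] by simp
  qed
  have "d dvd (\<Sum>orb\<in>orbits G (carrier G) conjugation. \<Sum>y\<in>orb. ?f y)"
  proof (rule dvd_sum)
    fix orb assume "orb \<in> orbits G (carrier G) conjugation"
    then obtain x where "x \<in> carrier G" "orb = orbit G conjugation x" by (auto simp: orbits_def)
    then show "d dvd (\<Sum>y\<in>orb. ?f y)" using orbit_dvd by blast
  qed
  also have "\<dots> = (\<Sum>x\<in>carrier G. ?f x)" by (rule conj.disjoint_sum[OF fin])
  also have "\<dots> = card (carrier G - group_center G)" by (rule card_as_sums[symmetric]) (use fin in auto)
  finally show ?thesis .
qed

lemma index_two_cover:
  assumes K: "subgroup K G" and M: "subgroup M G" and KM: "K \<subseteq> M" and fin: "finite M"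
    and card: "card M \<le> 2 * card K" and w: "w \<in> M" "w \<notin> K"
  shows "M = K \<union> (\<lambda>k. w \<otimes> k) ` K"
proof -
  have wc: "w \<in> carrier G" using w subgroup.subset[OF M] by blast
  have Kc: "K \<subseteq> carrier G" using subgroup.subset[OF K] .
  let ?wK = "(\<lambda>k. w \<otimes> k) ` K"
  have disj: "K \<inter> ?wK = {}"
  proof (rule ccontr)
    assume "K \<inter> ?wK \<noteq> {}"
    then obtain k where k: "k \<in> K" "w \<otimes> k \<in> K" by auto
    then have "w \<otimes> k \<otimes> inv k \<in> K" using K by (simp add: subgroup.m_closed subgroup.m_inv_closed)
    then show False using w k wc Kc by (auto simp: m_assoc)
  qed
  have "inj_on (\<lambda>k. w \<otimes> k) K" using inj_on_subset[OF inj_on_cmult[OF wc] Kc] .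
  then have "card (K \<union> ?wK) = 2 * card K"
    using disj finite_subset[OF KM fin] by (simp add: card_Un_disjoint card_image)
  moreover have "K \<union> ?wK \<subseteq> M" using KM w subgroup.m_closed[OF M] by auto
  ultimately show ?thesis using card card_seteq[OF fin] by metis
qed

lemma central_index_two_abelian:
  assumes K: "subgroup K G" and M: "subgroup M G" and KM: "K \<subseteq> M" and fin: "finite M"
    and card: "card M \<le> 2 * card K"
    and central: "\<And>k m. k \<in> K \<Longrightarrow> m \<in> M \<Longrightarrow> k \<otimes> m = m \<otimes> k"
    and a: "a \<in> M" and b: "b \<in> M"
  shows "a \<otimes> b = b \<otimes> a"
proof (cases "a \<in> K \<or> b \<in> K")
  case True then show ?thesis using central a b by metis
next
  case False
  then have w: "a \<in> M" "a \<notin> K" using a by auto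
  have wc: "a \<in> carrier G" using a subgroup.subset[OF M] by blast
  obtain v where v: "v \<in> K" "b = a \<otimes> v"
    using index_two_cover[OF K M KM fin card w] b False by blast
  have vc: "v \<in> carrier G" using v subgroup.subset[OF K] by blast
  have "a \<otimes> b = a \<otimes> (a \<otimes> v)" using v by simp
  also have "\<dots> = a \<otimes> (v \<otimes> a)" using central[OF v(1) a] by simp
  also have "\<dots> = b \<otimes> a" using v wc vc by (simp add: m_assoc)
  finally show ?thesis .
qed

lemma conj_mult_central:
  assumes u: "u \<in> carrier G" and h: "h \<in> carrier G" and z: "z \<in> group_center G"
  shows "(u \<otimes> z) \<otimes> h \<otimes> inv (u \<otimes> z) = u \<otimes> h \<otimes> inv u"
proof -
  have zc: "z \<in> carrier G" and zh: "z \<otimes> h = h \<otimes> z" using z h by (auto simp: group_center_def)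
  have "(u \<otimes> z) \<otimes> h \<otimes> inv (u \<otimes> z) = u \<otimes> (z \<otimes> h) \<otimes> inv z \<otimes> inv u"
    using u h zc by (simp add: group_word_simps)
  also have "\<dots> = u \<otimes> h \<otimes> inv u" using u h zc by (simp add: zh group_word_simps)
  finally show ?thesis .
qed

lemma commutator_mult_central:
  assumes u: "u \<in> carrier G" and v: "v \<in> carrier G"
    and z1: "z1 \<in> group_center G" and z2: "z2 \<in> group_center G"
  shows "(u \<otimes> z1) \<otimes> (v \<otimes> z2) \<otimes> inv (u \<otimes> z1) \<otimes> inv (v \<otimes> z2) = u \<otimes> v \<otimes> inv u \<otimes> inv v"
proof -
  have c: "z1 \<in> carrier G" "z2 \<in> carrier G" using z1 z2 by (auto simp: group_center_def)
  have "(u \<otimes> z1) \<otimes> (v \<otimes> z2) \<otimes> inv (u \<otimes> z1) \<otimes> inv (v \<otimes> z2)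
      = inv ((v \<otimes> z2) \<otimes> u \<otimes> inv (v \<otimes> z2) \<otimes> inv u)"
    using conj_mult_central[OF u _ z1, of "v \<otimes> z2"] commutator_swap[of "v \<otimes> z2" u] u v c
    by (simp add: group_word_simps)
  also have "\<dots> = inv (v \<otimes> u \<otimes> inv v \<otimes> inv u)" using conj_mult_central[OF v u z2] by simp
  also have "\<dots> = u \<otimes> v \<otimes> inv u \<otimes> inv v" using commutator_swap[OF u v] by simp
  finally show ?thesis .
qed

end

section \<open>Groups of order 16 have an abelian subgroup of index two\<close>

lemma divisors_of_16: "(n::nat) dvd 16 \<Longrightarrow> n \<in> {1, 2, 4, 8, 16}"
proof -
  assume "n dvd 16"
  then obtain i where "i \<le> 4" "n = 2 ^ i" using divides_primepow_nat[of 2 n 4] by auto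
  moreover have "i \<in> {0, 1, 2, 3, 4}" using \<open>i \<le> 4\<close> by auto
  ultimately show ?thesis by auto
qed

context group
begin

lemma subgroup_card_order_16:
  assumes "order G = 16" "subgroup H G"
  shows "card H \<in> {1, 2, 4, 8, 16}"
  using lagrange[OF assms(2)] assms(1) divisors_of_16 by (metis dvd_triv_right)

lemma center_insert_generate:
  assumes x: "x \<in> carrier G"
  defines "W \<equiv> generate G (insert x (group_center G))"
  shows "subgroup W G" and "W \<subseteq> centralizer G x"
    and "\<And>w c. w \<in> W \<Longrightarrow> c \<in> centralizer G x \<Longrightarrow> w \<otimes> c = c \<otimes> w"
proof -
  have S: "insert x (group_center G) \<subseteq> carrier G" using x by (auto simp: group_center_def)
  show "subgroup W G" unfolding W_def using generate_is_subgroup[OF S] .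
  have "insert x (group_center G) \<subseteq> centralizer G x"
    using x by (auto simp: centralizer_def group_center_def)
  then show "W \<subseteq> centralizer G x"
    unfolding W_def using generate_subgroup_incl centralizer_subgroup[OF x] by blast
  fix w c assume w: "w \<in> W" and c: "c \<in> centralizer G x"
  have cc: "c \<in> carrier G" using c by (simp add: centralizer_def)
  have "s \<otimes> c = c \<otimes> s" if "s \<in> insert x (group_center G)" for s
    using that c cc by (auto simp: centralizer_def group_center_def)
  then show "w \<otimes> c = c \<otimes> w" using commute_generate[OF S cc] w unfolding W_def by blast
qed

text \<open>A nonabelian group of order 16 has an abelian subgroup of order 8. By the class equation the
  centre has order at least 2; a centralizer of order 8 exists (otherwise the class equation would force
  a centre of order at least 4, too large), and it is abelian because its subgroup generated by the centre
  and the centralized element is central of index at most 2.\<close>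
lemma order_16_abelian_subgroup:
  assumes o16: "order G = 16" and x0: "x0 \<in> carrier G" "x0 \<notin> group_center G"
  shows "\<exists>A. subgroup A G \<and> card A = 8 \<and> (\<forall>a\<in>A. \<forall>b\<in>A. a \<otimes> b = b \<otimes> a)"
proof -
  let ?Z = "group_center G"
  let ?W = "\<lambda>x. generate G (insert x ?Z)"
  have fin: "finite (carrier G)" using o16 order_gt_0_iff_finite by simp
  have subfin: "finite H" if "subgroup H G" for H
    using that fin subgroup.subset finite_subset by metis
  note card_cases = subgroup_card_order_16[OF o16]
  have Zs: "subgroup ?Z G" by (rule group_center_subgroup)
  have noncentral_Z: "card (carrier G - ?Z) = 16 - card ?Z"
    using card_Diff_subset[OF subfin[OF Zs] subgroup.subset[OF Zs]] o16 by (simp add: order_def)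
  have W_big: "2 * card ?Z \<le> card (?W x)" if x: "x \<in> carrier G" "x \<notin> ?Z" for x
  proof -
    have "?Z \<subset> ?W x" using x generate.incl[of _ "insert x ?Z" G] by blast
    then have "card ?Z < card (?W x)"
      using psubset_card_mono subfin center_insert_generate(1)[OF x(1)] by blast
    then show ?thesis using card_cases[OF Zs] card_cases[OF center_insert_generate(1)[OF x(1)]] by auto
  qed
  have C_big: "2 * card ?Z \<le> card (centralizer G x)" if x: "x \<in> carrier G" "x \<notin> ?Z" for x
    using W_big[OF x] card_mono[OF subfin[OF centralizer_subgroup[OF x(1)]]]
      center_insert_generate(2)[OF x(1)] by (meson le_trans)
  have C_small: "card (centralizer G x) \<in> {1, 2, 4, 8}" if x: "x \<in> carrier G" "x \<notin> ?Z" for x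
  proof -
    have "centralizer G x \<noteq> carrier G" using centralizer_eq_carrier_iff[OF x(1)] x(2) by simp
    then have "card (centralizer G x) \<noteq> 16"
      using card_subset_eq[OF fin] subgroup.subset[OF centralizer_subgroup[OF x(1)]] o16
      by (metis order_def)
    then show ?thesis using card_cases[OF centralizer_subgroup[OF x(1)]] by auto
  qed
  have class_size: "card (orbit G conjugation x) * card (centralizer G x) = 16" if "x \<in> carrier G" for x
    using class_size_times_centralizer[OF that] o16 by simp
  have "2 dvd card (carrier G - ?Z)"
  proof (rule class_equation_dvd[OF fin])
    fix x assume x: "x \<in> carrier G" "x \<notin> ?Z"
    show "2 dvd card (orbit G conjugation x)" using class_size[OF x(1)] C_small[OF x] by auto
  qed
  then have "2 dvd 16 - card ?Z" using noncentral_Z by simp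
  then have Z2: "2 \<le> card ?Z" using card_cases[OF Zs] by (elim insertE emptyE) simp_all
  have "\<exists>x. x \<in> carrier G \<and> x \<notin> ?Z \<and> card (centralizer G x) = 8"
  proof (rule ccontr)
    assume none: "\<not> ?thesis"
    have "4 dvd card (carrier G - ?Z)"
    proof (rule class_equation_dvd[OF fin])
      fix x assume x: "x \<in> carrier G" "x \<notin> ?Z"
      have "card (centralizer G x) = 4" using C_small[OF x] C_big[OF x] Z2 none x by auto
      then show "4 dvd card (orbit G conjugation x)" using class_size[OF x(1)] by auto
    qed
    then have "4 dvd 16 - card ?Z" using noncentral_Z by simp
    then have "4 \<le> card ?Z" using card_cases[OF Zs] by (elim insertE emptyE) simp_all
    then show False using C_big[OF x0] C_small[OF x0] none x0 by auto
  qed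
  then obtain x where x: "x \<in> carrier G" "x \<notin> ?Z" and C8: "card (centralizer G x) = 8" by blast
  have "\<forall>a\<in>centralizer G x. \<forall>b\<in>centralizer G x. a \<otimes> b = b \<otimes> a"
    using central_index_two_abelian[OF center_insert_generate(1)[OF x(1)] centralizer_subgroup[OF x(1)]
        center_insert_generate(2)[OF x(1)] subfin[OF centralizer_subgroup[OF x(1)]] _
        center_insert_generate(3)[OF x(1)]]
      W_big[OF x] Z2 C8 by auto
  then show ?thesis using centralizer_subgroup[OF x(1)] C8 by blast
qed

end

section \<open>The derived subgroup of a group with an abelian subgroup of index two\<close>

lemma (in group_hom) card_image_times_kernel:
  assumes fin: "finite (carrier G)"
  shows "card (h ` carrier G) * card (kernel G H h) = order G"
proof -
  let ?I = "H\<lparr>carrier := h ` carrier G\<rparr>"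
  interpret I: group_hom G ?I h
  proof (intro group_hom.intro group_hom_axioms.intro)
    show "group ?I" by (rule H.subgroup_imp_group[OF img_is_subgroup])
    show "h \<in> hom G ?I" using homh by (auto simp: hom_def)
  qed (rule G.is_group)
  have "order (G Mod kernel G ?I h) = order ?I"
    by (rule iso_same_order[OF I.FactGroup_iso_set]) simp
  then have "card (rcosets kernel G H h) = card (h ` carrier G)"
    by (simp add: order_def FactGroup_def kernel_def)
  then show ?thesis using G.lagrange[OF subgroup_kernel] by simp
qed

text \<open>Conjugation
  by t maps A to itself, and the commutator map a \<mapsto> [t, a] is an endomorphism of A whose image is
  the derived subgroup of G.\<close>
locale abelian_index_two = group +
  fixes A :: "'a set" and t :: 'a
  assumes A_subgroup: "subgroup A G"
    and A_comm: "\<And>a b. a \<in> A \<Longrightarrow> b \<in> A \<Longrightarrow> a \<otimes> b = b \<otimes> a"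
    and finite_carrier: "finite (carrier G)"
    and index_two: "order G = 2 * card A"
    and t_carrier: "t \<in> carrier G" and t_notin: "t \<notin> A"
begin

definition tconj :: "'a \<Rightarrow> 'a" where "tconj a = t \<otimes> a \<otimes> inv t"

definition tcomm :: "'a \<Rightarrow> 'a" where "tcomm a = t \<otimes> a \<otimes> inv t \<otimes> inv a"

lemma A_carrier: "a \<in> A \<Longrightarrow> a \<in> carrier G"
  using subgroup.subset[OF A_subgroup] by blast

lemma A_closed: "a \<in> A \<Longrightarrow> b \<in> A \<Longrightarrow> a \<otimes> b \<in> A" "a \<in> A \<Longrightarrow> inv a \<in> A" "\<one> \<in> A"
  using A_subgroup by (auto intro: subgroup.m_closed subgroup.m_inv_closed subgroup.one_closed)

lemma coset_cover: "g \<in> carrier G \<Longrightarrow> g \<notin> A \<Longrightarrow> \<exists>a\<in>A. g = t \<otimes> a"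
  using index_two_cover[OF A_subgroup subgroup_self subgroup.subset[OF A_subgroup] finite_carrier
      _ t_carrier t_notin] index_two by (auto simp: order_def)

lemma tconj_closed:
  assumes a: "a \<in> A" shows "tconj a \<in> A"
proof (rule ccontr)
  assume "tconj a \<notin> A"
  moreover have "tconj a \<in> carrier G" using t_carrier A_carrier[OF a] by (simp add: tconj_def)
  ultimately obtain k where k: "k \<in> A" "t \<otimes> a \<otimes> inv t = t \<otimes> k"
    using coset_cover unfolding tconj_def by blast
  then have "a \<otimes> inv t = k" using t_carrier A_carrier a by (simp add: m_assoc)
  then have "inv t = inv a \<otimes> k" using t_carrier A_carrier[OF a] by (auto simp: group_word_simps)
  then have "inv (inv t) \<in> A" using A_closed a k by simp
  then show False using t_notin t_carrier by simp
qed

text \<open>Since G/A has order two, t^2 lies in A; hence conjugation by t is an involution of A.\<close>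
lemma t_square: "t \<otimes> t \<in> A"
proof (rule ccontr)
  assume "t \<otimes> t \<notin> A"
  then obtain k where "k \<in> A" "t \<otimes> t = t \<otimes> k" using coset_cover t_carrier by blast
  then show False using t_notin t_carrier A_carrier by auto
qed

lemma tconj_mult: "a \<in> carrier G \<Longrightarrow> b \<in> carrier G \<Longrightarrow> tconj (a \<otimes> b) = tconj a \<otimes> tconj b"
  and tconj_inv: "a \<in> carrier G \<Longrightarrow> tconj (inv a) = inv (tconj a)"
  using t_carrier by (simp_all add: tconj_def group_word_simps)

lemma tconj_tconj:
  assumes a: "a \<in> A" shows "tconj (tconj a) = a"
proof -
  have "tconj (tconj a) = (t \<otimes> t) \<otimes> a \<otimes> inv (t \<otimes> t)"
    using t_carrier A_carrier[OF a] by (simp add: tconj_def group_word_simps)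
  also have "\<dots> = a \<otimes> (t \<otimes> t) \<otimes> inv (t \<otimes> t)" using A_comm[OF t_square a] by simp
  also have "\<dots> = a" using t_carrier A_carrier[OF a] by (simp add: group_word_simps)
  finally show ?thesis .
qed

lemma tcomm_tconj: "tcomm a = tconj a \<otimes> inv a"
  by (simp add: tcomm_def tconj_def)

lemma tcomm_closed: "a \<in> A \<Longrightarrow> tcomm a \<in> A"
  using A_closed tconj_closed by (simp add: tcomm_tconj)

text \<open>As A is abelian, the commutator map is an endomorphism of A.\<close>
lemma tcomm_mult:
  assumes a: "a \<in> A" and b: "b \<in> A"
  shows "tcomm (a \<otimes> b) = tcomm a \<otimes> tcomm b"
proof -
  have "tcomm (a \<otimes> b) = tconj a \<otimes> ((tconj b \<otimes> inv b) \<otimes> inv a)"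
    using a b A_carrier tconj_closed by (simp add: tcomm_tconj tconj_mult group_word_simps)
  also have "\<dots> = tconj a \<otimes> (inv a \<otimes> (tconj b \<otimes> inv b))"
    using A_comm A_closed tconj_closed a b by metis
  also have "\<dots> = tcomm a \<otimes> tcomm b"
    using a b A_carrier tconj_closed by (simp add: tcomm_tconj m_assoc)
  finally show ?thesis .
qed

lemma tcomm_hom: "group_hom (G\<lparr>carrier := A\<rparr>) (G\<lparr>carrier := A\<rparr>) tcomm"
proof -
  interpret A: group "G\<lparr>carrier := A\<rparr>" by (rule subgroup_imp_group[OF A_subgroup])
  show ?thesis
    by (unfold_locales) (auto simp: hom_def tcomm_closed tcomm_mult)
qed

abbreviation D :: "'a set" where "D \<equiv> tcomm ` A"

lemma D_subgroup: "subgroup D G"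
  using incl_subgroup[OF A_subgroup group_hom.img_is_subgroup[OF tcomm_hom]] by simp

lemma D_subset_A: "D \<subseteq> A"
  using tcomm_closed by blast

lemma tconj_tcomm: "a \<in> A \<Longrightarrow> tconj (tcomm a) = tcomm (tconj a)"
  using A_carrier tconj_closed by (simp add: tcomm_tconj tconj_mult tconj_inv tconj_tconj)

lemma commutator_t_coset:
  assumes a1: "a1 \<in> A" and a2: "a2 \<in> A"
  shows "(t \<otimes> a1) \<otimes> a2 \<otimes> inv (t \<otimes> a1) \<otimes> inv a2 = tcomm a2"
proof -
  have "(t \<otimes> a1) \<otimes> a2 \<otimes> inv (t \<otimes> a1) \<otimes> inv a2 = t \<otimes> ((a1 \<otimes> a2) \<otimes> (inv a1 \<otimes> (inv t \<otimes> inv a2)))"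
    using t_carrier A_carrier a1 a2 by (simp add: group_word_simps)
  also have "\<dots> = t \<otimes> ((a2 \<otimes> a1) \<otimes> (inv a1 \<otimes> (inv t \<otimes> inv a2)))" using A_comm[OF a1 a2] by simp
  also have "\<dots> = tcomm a2" using t_carrier A_carrier a1 a2 by (simp add: tcomm_def group_word_simps)
  finally show ?thesis .
qed

lemma D_conj_closed:
  assumes g: "g \<in> carrier G" and d: "d \<in> D"
  shows "g \<otimes> d \<otimes> inv g \<in> D"
proof -
  obtain b where b: "b \<in> A" "d = tcomm b" using d by blast
  have dA: "d \<in> A" using d D_subset_A by blast
  show ?thesis
  proof (cases "g \<in> A")
    case True
    then have "g \<otimes> d \<otimes> inv g = d" using A_comm[OF True dA] A_carrier True dA by (simp add: group_word_simps)
    then show ?thesis using d by simp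
  next
    case False
    then obtain a where a: "a \<in> A" "g = t \<otimes> a" using coset_cover g by blast
    have "g \<otimes> d \<otimes> inv g = tconj (a \<otimes> d \<otimes> inv a)"
      using a t_carrier A_carrier dA by (simp add: tconj_def group_word_simps)
    also have "\<dots> = tconj d" using A_comm[OF a(1) dA] A_carrier a dA by (simp add: group_word_simps)
    also have "\<dots> = tcomm (tconj b)" using b tconj_tcomm by simp
    finally show ?thesis using tconj_closed[OF b(1)] by blast
  qed
qed

lemma commutator_in_D:
  assumes x: "x \<in> carrier G" and y: "y \<in> carrier G"
  shows "x \<otimes> y \<otimes> inv x \<otimes> inv y \<in> D"
proof (cases "x \<in> A")
  case xA: True
  show ?thesis
  proof (cases "y \<in> A")
    case True
    then have "x \<otimes> y \<otimes> inv x \<otimes> inv y = tcomm \<one>"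
      using A_comm[OF xA True] x y t_carrier by (simp add: tcomm_def group_word_simps)
    then show ?thesis using A_closed(3) by simp
  next
    case False
    then obtain a2 where a2: "a2 \<in> A" "y = t \<otimes> a2" using coset_cover y by blast
    have "x \<otimes> y \<otimes> inv x \<otimes> inv y = inv (tcomm x)"
      using commutator_swap[OF x y] commutator_t_coset[OF a2(1) xA] a2(2) by simp
    then show ?thesis using subgroup.m_inv_closed[OF D_subgroup] xA by simp
  qed
next
  case False
  then obtain a1 where a1: "a1 \<in> A" "x = t \<otimes> a1" using coset_cover x by blast
  show ?thesis
  proof (cases "y \<in> A")
    case True
    then show ?thesis using commutator_t_coset[OF a1(1) True] a1(2) by simp
  next
    case False
    then obtain a2 where a2: "a2 \<in> A" "y = t \<otimes> a2" using coset_cover y by blast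
    define b where "b = inv a1 \<otimes> a2"
    have b: "b \<in> A" "y = x \<otimes> b"
      using a1 a2 A_closed t_carrier A_carrier by (auto simp: b_def group_word_simps)
    have "x \<otimes> y \<otimes> inv x \<otimes> inv y = x \<otimes> tcomm b \<otimes> inv x"
      using commutator_mult_right[OF x A_carrier[OF b(1)]] commutator_t_coset[OF a1(1) b(1)] a1(2) b(2)
      by simp
    then show ?thesis using D_conj_closed[OF x] b(1) by auto
  qed
qed

theorem derived_eq_D: "derived G (carrier G) = D"
proof
  have "derived_set G (carrier G) \<subseteq> D" using commutator_in_D by blast
  then show "derived G (carrier G) \<subseteq> D"
    unfolding derived_def by (rule generate_subgroup_incl[OF _ D_subgroup])
  have "tcomm a \<in> derived_set G (carrier G)" if "a \<in> A" for a
    using t_carrier A_carrier[OF that] unfolding tcomm_def by blast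
  then show "D \<subseteq> derived G (carrier G)" unfolding derived_def by (auto intro: generate.incl)
qed

lemma card_D_kernel: "card D * card {a \<in> A. tcomm a = \<one>} = card A"
  using group_hom.card_image_times_kernel[OF tcomm_hom] finite_subset[OF _ finite_carrier]
    subgroup.subset[OF A_subgroup] by (simp add: kernel_def order_def)

lemma tcomm_on_D:
  assumes d: "d \<in> D" shows "tcomm d = inv (d \<otimes> d)"
proof -
  obtain a where a: "a \<in> A" "d = tcomm a" using d by blast
  have "tconj d = a \<otimes> inv (tconj a)"
    using a A_carrier tconj_closed by (simp add: tcomm_tconj tconj_mult tconj_inv tconj_tconj)
  also have "\<dots> = inv d" using a A_carrier tconj_closed by (simp add: tcomm_tconj group_word_simps)
  moreover have "d \<in> carrier G" using d D_subset_A A_carrier by blast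
  ultimately show ?thesis by (simp add: tcomm_tconj inv_mult_group)
qed

end

section \<open>Groups of order 16 have cyclic derived subgroup\<close>

context group
begin

text \<open>For a nonabelian group it is the
  image D of the commutator map of an abelian subgroup A of index two, whose order divides 8; order 8
  is impossible (an involution of A would lie in the trivial kernel) and for order 4 the kernel is too
  small to contain all elements of D, so D has an element of order 4.\<close>
theorem order_16_derived_cyclic:
  assumes o16: "order G = 16"
  shows "\<exists>c\<in>carrier G. derived G (carrier G) = generate G {c}"
proof (cases "carrier G \<subseteq> group_center G")
  case True
  then have "derived G (carrier G) = {\<one>}"
    using derived_of_commuting_set[OF subset_refl] by (auto simp: group_center_def)
  then show ?thesis using generate_one by blast
next
  case False
  then obtain x0 where x0: "x0 \<in> carrier G" "x0 \<notin> group_center G" by blast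
  obtain A where A: "subgroup A G" "card A = 8" and A_comm: "\<forall>a\<in>A. \<forall>b\<in>A. a \<otimes> b = b \<otimes> a"
    using order_16_abelian_subgroup[OF o16 x0] by blast
  have "A \<noteq> carrier G" using A(2) o16 by (auto simp: order_def)
  then obtain t where t: "t \<in> carrier G" "t \<notin> A" using subgroup.subset[OF A(1)] by blast
  have fin: "finite (carrier G)" using o16 order_gt_0_iff_finite by simp
  interpret abelian_index_two G A t
    using A A_comm t o16 fin by (intro abelian_index_two.intro abelian_index_two_axioms.intro is_group) auto
  have finA: "finite A" using finite_subset[OF subgroup.subset[OF A(1)] fin] .
  let ?K = "{a \<in> A. tcomm a = \<one>}"
  have finK: "finite ?K" using finA by simp
  have card_DK: "card D * card ?K = 8" using card_D_kernel A(2) by simp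
  have finD: "finite D" using finA by simp
  have one_K: "\<one> \<in> ?K" using A_closed(3) t by (simp add: tcomm_def)
  have "\<exists>b\<in>D. ord b = card D"
  proof -
    have "card D dvd 8" using card_DK by (metis dvd_triv_left)
    then have D16: "card D dvd 16" by (rule dvd_trans) simp
    have "1 \<le> card ?K" using one_K finK by (metis One_nat_def Suc_leI card_gt_0_iff empty_iff)
    then have D8: "card D \<le> 8" using card_DK mult_le_mono2[of 1 "card ?K" "card D"] by simp
    consider (one) "card D = 1" | (two) "card D = 2" | (four) "card D = 4" | (eight) "card D = 8"
      using divisors_of_16[OF D16] D8 by fastforce
    then show ?thesis
    proof cases
      case one
      then show ?thesis using subgroup.one_closed[OF D_subgroup] by (intro bexI[of _ \<one>]) simp_all
    next
      case two
      have "\<not> D \<subseteq> {\<one>}" using card_mono[of "{\<one>}" D] two by auto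
      then obtain b where b: "b \<in> D" "b \<noteq> \<one>" by blast
      then have "ord b = card D"
        using ord_eq_prime_power_card[OF D_subgroup b(1) two_is_prime_nat, of 0] two b A_carrier D_subset_A
        by auto
      then show ?thesis using b by blast
    next
      case four
      then have K2: "card ?K = 2" using card_DK by simp
      have "\<exists>b\<in>D. b \<otimes> b \<noteq> \<one>"
      proof (rule ccontr)
        assume sq: "\<not> ?thesis"
        have "d \<in> ?K" if d: "d \<in> D" for d
        proof -
          have "d \<otimes> d = \<one>" using sq d by blast
          then have "tcomm d = \<one>" using tcomm_on_D[OF d] by simp
          then show ?thesis using d D_subset_A by blast
        qed
        then have "D \<subseteq> ?K" by blast
        then have "card D \<le> card ?K" using card_mono[OF finK] by blast
        then show False using four K2 by simp
      qed
      then obtain b where b: "b \<in> D" "b \<otimes> b \<noteq> \<one>" by blast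
      then have "ord b = card D"
        using ord_eq_prime_power_card[OF D_subgroup b(1) two_is_prime_nat, of 1] four D_subset_A A_carrier
        by (auto simp: numeral_2_eq_2)
      then show ?thesis using b by blast
    next
      case eight
      have "card ?K = 1" using card_DK eight by simp
      then obtain k where K: "?K = {k}" by (rule card_1_singletonE)
      have DA: "D = A" using card_subset_eq[OF finA D_subset_A] eight A(2) by simp
      obtain a where a: "a \<in> A" "a \<noteq> \<one>"
        using card_mono[of "{\<one>}" A] A(2) by auto
      have ac: "a \<in> carrier G" using a A_carrier by blast
      have o8: "ord a dvd 8" using ord_dvd_subgroup_card[OF A(1) a(1)] A(2) by simp
      then have pos: "0 < ord a" by (auto intro: gr0I)
      from o8 have "ord a dvd 16" by (rule dvd_trans) simp
      moreover have "ord a \<noteq> 1" using ord_eq_1[OF ac] a(2) by simp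
      ultimately have even: "2 dvd ord a" using divisors_of_16 by fastforce
      define e where "e = a [^] (ord a div 2)"
      have ord_e: "ord e = 2" unfolding e_def
        using ord_pow[OF ac, of "ord a div 2"] even pos by (auto elim!: dvdE)
      have eA: "e \<in> A" unfolding e_def using subgroup_int_pow_closed[OF A(1) a(1), of "int (ord a div 2)"]
        by (simp add: int_pow_int)
      have "e \<otimes> e = \<one>" using pow_eq_id[of e 2] ord_e eA A_carrier by (simp add: numeral_2_eq_2)
      then have "tcomm e = \<one>" using tcomm_on_D[of e] DA eA by simp
      then have "e \<in> {k}" "\<one> \<in> {k}" using K eA one_K by auto
      then have "e = \<one>" by simp
      then show ?thesis using ord_e by simp
    qed
  qed
  then obtain b where b: "b \<in> D" "ord b = card D" by blast
  then have "derived G (carrier G) = generate G {b}"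
    using derived_eq_D generate_eq_subgroup[OF D_subgroup finD] by simp
  then show ?thesis using b D_subset_A A_carrier by blast
qed

corollary subgroup_order_16_derived_cyclic:
  assumes Q: "subgroup Q G" and card: "card Q = 16"
  shows "\<exists>c\<in>Q. derived G Q = generate G {c}"
proof -
  interpret Q: group "G\<lparr>carrier := Q\<rparr>" by (rule subgroup_imp_group[OF Q])
  obtain c where c: "c \<in> Q" and e: "derived (G\<lparr>carrier := Q\<rparr>) Q = generate (G\<lparr>carrier := Q\<rparr>) {c}"
    using Q.order_16_derived_cyclic card by (auto simp: order_def)
  have "derived (G\<lparr>carrier := Q\<rparr>) Q = derived G Q" by (rule derived_consistent[OF subset_refl Q])
  moreover have "generate (G\<lparr>carrier := Q\<rparr>) {c} = generate G {c}"
    by (rule generate_consistent) (use c Q in auto)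
  ultimately show ?thesis using e c by auto
qed

end

section \<open>Groups with a normal subgroup of prime order and a complement of prime-power order\<close>

locale prime_normal_complement = group +
  fixes p q k :: nat and P Q :: "'a set"
  assumes finite_carrier: "finite (carrier G)"
    and P_normal: "P \<lhd> G" and P_card: "card P = p" and p_prime: "Factorial_Ring.prime p"
    and Q_subgroup: "subgroup Q G" and Q_card: "card Q = q ^ k" and q_prime: "Factorial_Ring.prime q"
    and p_ne_q: "p \<noteq> q"
    and order_eq: "order G = card Q * card P"
begin

lemma P_subgroup: "subgroup P G"
  using P_normal normal_imp_subgroup by blast

lemma P_carrier: "x \<in> P \<Longrightarrow> x \<in> carrier G"
  using subgroup.subset[OF P_subgroup] by blast

lemma Q_carrier: "x \<in> Q \<Longrightarrow> x \<in> carrier G"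
  using subgroup.subset[OF Q_subgroup] by blast

lemma finite_P: "finite P"
  using finite_subset[OF subgroup.subset[OF P_subgroup] finite_carrier] .

lemma coprime_Q_P: "coprime (card Q) p"
  using primes_coprime[OF q_prime p_prime] p_ne_q Q_card by simp

lemma P_generated:
  assumes y: "y \<in> P" and y1: "y \<noteq> \<one>"
  shows "generate G {y} = P"
proof -
  have "ord y dvd p" using ord_dvd_subgroup_card[OF P_subgroup y] P_card by simp
  moreover have "ord y \<noteq> 1" using ord_eq_1 P_carrier[OF y] y1 by simp
  moreover have "\<forall>m. m dvd p \<longrightarrow> m = 1 \<or> m = p" using p_prime by (simp add: prime_nat_iff)
  ultimately have "ord y = card P" using P_card by blast
  then show ?thesis using generate_eq_subgroup[OF P_subgroup finite_P y] by simp
qed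

lemma P_nontrivial: "\<exists>y\<in>P. y \<noteq> \<one>"
proof (rule ccontr)
  assume "\<not> ?thesis"
  then have "P \<subseteq> {\<one>}" by blast
  then have "card P \<le> 1" using card_mono[of "{\<one>}" P] by simp
  then show False using P_card prime_gt_1_nat[OF p_prime] by simp
qed

lemma P_powers:
  assumes y: "y \<in> P" "y \<noteq> \<one>" and z: "z \<in> P"
  obtains n :: nat where "z = y [^] n"
  using P_generated[OF y] z generate_pow_on_finite_carrier[OF finite_carrier P_carrier[OF y(1)]] by blast

lemma P_comm: "a \<in> P \<Longrightarrow> b \<in> P \<Longrightarrow> a \<otimes> b = b \<otimes> a"
proof -
  assume a: "a \<in> P" and b: "b \<in> P"
  obtain y where y: "y \<in> P" "y \<noteq> \<one>" using P_nontrivial by blast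
  obtain m :: nat where m: "a = y [^] m" by (rule P_powers[OF y a])
  obtain n :: nat where n: "b = y [^] n" by (rule P_powers[OF y b])
  show ?thesis using m n P_carrier[OF y(1)] by (simp add: nat_pow_mult add.commute)
qed

text \<open>Conjugation by any element acts on the cyclic group P as a power map; hence these
  automorphisms commute and every commutator centralizes P.\<close>
lemma P_conj_power:
  assumes g: "g \<in> carrier G"
  shows "\<exists>n::nat. \<forall>z\<in>P. g \<otimes> z \<otimes> inv g = z [^] n"
proof -
  obtain y where y: "y \<in> P" "y \<noteq> \<one>" using P_nontrivial by blast
  have yc: "y \<in> carrier G" using P_carrier[OF y(1)] .
  obtain n :: nat where n: "g \<otimes> y \<otimes> inv g = y [^] n"
    by (rule P_powers[OF y normal.inv_op_closed2[OF P_normal g y(1)]])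
  have "g \<otimes> z \<otimes> inv g = z [^] n" if z: "z \<in> P" for z
  proof -
    obtain m :: nat where m: "z = y [^] m" by (rule P_powers[OF y z])
    have "g \<otimes> z \<otimes> inv g = (y [^] n) [^] m" using m n conj_pow[OF g yc] by simp
    also have "\<dots> = z [^] n" using m yc by (simp add: nat_pow_pow mult.commute)
    finally show ?thesis .
  qed
  then show ?thesis by blast
qed

lemma P_conj_commute:
  assumes g: "g \<in> carrier G" and h: "h \<in> carrier G" and z: "z \<in> P"
  shows "g \<otimes> (h \<otimes> z \<otimes> inv h) \<otimes> inv g = h \<otimes> (g \<otimes> z \<otimes> inv g) \<otimes> inv h"
proof -
  obtain a :: nat where "\<forall>z\<in>P. g \<otimes> z \<otimes> inv g = z [^] a" using P_conj_power[OF g] by blast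
  then have a: "\<And>z. z \<in> P \<Longrightarrow> g \<otimes> z \<otimes> inv g = z [^] a" by blast
  obtain b :: nat where "\<forall>z\<in>P. h \<otimes> z \<otimes> inv h = z [^] b" using P_conj_power[OF h] by blast
  then have b: "\<And>z. z \<in> P \<Longrightarrow> h \<otimes> z \<otimes> inv h = z [^] b" by blast
  have zb: "z [^] b \<in> P" and za: "z [^] a \<in> P"
    using normal.inv_op_closed2[OF P_normal g z] normal.inv_op_closed2[OF P_normal h z] a b z by metis+
  have "g \<otimes> (h \<otimes> z \<otimes> inv h) \<otimes> inv g = z [^] (b * a)"
    using a[OF zb] b[OF z] P_carrier[OF z] by (simp add: nat_pow_pow)
  also have "\<dots> = h \<otimes> (g \<otimes> z \<otimes> inv g) \<otimes> inv h"
    using a[OF z] b[OF za] P_carrier[OF z] by (simp add: nat_pow_pow mult.commute)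
  finally show ?thesis .
qed

lemma commutator_centralizes_P:
  assumes g: "g \<in> carrier G" and h: "h \<in> carrier G" and z: "z \<in> P"
  shows "(g \<otimes> h \<otimes> inv g \<otimes> inv h) \<otimes> z = z \<otimes> (g \<otimes> h \<otimes> inv g \<otimes> inv h)"
proof -
  let ?c = "g \<otimes> h \<otimes> inv g \<otimes> inv h"
  have zc: "z \<in> carrier G" using P_carrier[OF z] .
  define w where "w = inv h \<otimes> z \<otimes> h"
  have wP: "w \<in> P" unfolding w_def using normal.inv_op_closed1[OF P_normal h z] .
  have "?c \<otimes> z \<otimes> inv ?c = g \<otimes> (h \<otimes> (inv g \<otimes> w \<otimes> inv (inv g)) \<otimes> inv h) \<otimes> inv g"
    unfolding w_def using g h zc by (simp add: group_word_simps)
  also have "\<dots> = g \<otimes> (inv g \<otimes> (h \<otimes> w \<otimes> inv h) \<otimes> inv (inv g)) \<otimes> inv g"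
    using P_conj_commute[OF h inv_closed[OF g] wP] by simp
  also have "\<dots> = z" unfolding w_def using g h zc by (simp add: group_word_simps)
  finally show ?thesis using conj_fixed_iff_commute[of ?c z] g h zc by simp
qed

lemma derived_centralizes_P:
  assumes w: "w \<in> derived G (carrier G)" and z: "z \<in> P"
  shows "w \<otimes> z = z \<otimes> w"
  using commute_generate[OF derived_set_in_carrier[OF subset_refl] P_carrier[OF z] _ w[unfolded derived_def]]
    commutator_centralizes_P[OF _ _ z] by blast

text \<open>Q and P have coprime orders, so they intersect trivially and G = Q P with unique factorizations.\<close>
lemma Q_inter_P: "Q \<inter> P = {\<one>}"
proof
  show "{\<one>} \<subseteq> Q \<inter> P" using subgroup.one_closed[OF Q_subgroup] subgroup.one_closed[OF P_subgroup] by blast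
  show "Q \<inter> P \<subseteq> {\<one>}"
  proof
    fix x assume x: "x \<in> Q \<inter> P"
    have "ord x dvd card Q" "ord x dvd p"
      using ord_dvd_subgroup_card[OF Q_subgroup] ord_dvd_subgroup_card[OF P_subgroup] x P_card by auto
    then have "ord x = 1" using coprime_Q_P by (metis coprime_common_divisor_nat nat_dvd_1_iff_1)
    then show "x \<in> {\<one>}" using ord_eq_1 P_carrier x by blast
  qed
qed

lemma factorization_unique:
  assumes "q1 \<in> Q" "x1 \<in> P" "q2 \<in> Q" "x2 \<in> P" and eq: "q1 \<otimes> x1 = q2 \<otimes> x2"
  shows "q1 = q2 \<and> x1 = x2"
proof -
  have c: "q1 \<in> carrier G" "x1 \<in> carrier G" "q2 \<in> carrier G" "x2 \<in> carrier G"
    using assms Q_carrier P_carrier by auto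
  have "inv q2 \<otimes> q1 = x2 \<otimes> inv x1"
  proof -
    have "inv q2 \<otimes> q1 = inv q2 \<otimes> (q1 \<otimes> x1) \<otimes> inv x1" using c by (simp add: group_word_simps)
    also have "\<dots> = x2 \<otimes> inv x1" using c by (simp add: eq group_word_simps)
    finally show ?thesis .
  qed
  moreover have "inv q2 \<otimes> q1 \<in> Q" "x2 \<otimes> inv x1 \<in> P"
    using assms Q_subgroup P_subgroup by (auto intro: subgroup.m_closed subgroup.m_inv_closed)
  ultimately have "inv q2 \<otimes> q1 \<in> Q \<inter> P" by simp
  then have "inv q2 \<otimes> q1 = \<one>" using Q_inter_P by simp
  moreover have "q1 = q2 \<otimes> (inv q2 \<otimes> q1)" using c by (simp add: group_word_simps)
  ultimately have "q1 = q2" using c by simp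
  then show ?thesis using eq c by simp
qed

lemma QP_eq_carrier: "Q <#> P = carrier G"
proof -
  have sub: "Q <#> P \<subseteq> carrier G" unfolding set_mult_def using Q_carrier P_carrier by blast
  have image: "Q <#> P = (\<lambda>(r, x). r \<otimes> x) ` (Q \<times> P)" unfolding set_mult_def by auto
  have "inj_on (\<lambda>(r, x). r \<otimes> x) (Q \<times> P)"
    by (rule inj_onI) (use factorization_unique in auto)
  then have "card (Q <#> P) = card Q * card P" using image card_image card_cartesian_product by metis
  then show ?thesis using card_subset_eq[OF finite_carrier sub] order_eq by (simp add: order_def)
qed

lemma factorization:
  assumes "g \<in> carrier G"
  obtains r x where "r \<in> Q" "x \<in> P" "g = r \<otimes> x"
  using assms QP_eq_carrier unfolding set_mult_def by blast

theorem semidirect: "internal_semidirect G Q P"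
  unfolding internal_semidirect_def using P_normal Q_subgroup QP_eq_carrier Q_inter_P by simp

text \<open>The projection of G = Q \<ltimes> P onto Q is a homomorphism; hence the derived subgroup of G
  lies in Q' P.\<close>
definition proj_Q :: "'a \<Rightarrow> 'a" where
  "proj_Q g = (THE r. r \<in> Q \<and> (\<exists>x\<in>P. g = r \<otimes> x))"

lemma proj_Q_eq:
  assumes "r \<in> Q" "x \<in> P" shows "proj_Q (r \<otimes> x) = r"
  unfolding proj_Q_def using factorization_unique assms by (intro the_equality) blast+

lemma proj_Q_hom: "group_hom G G proj_Q"
proof -
  have "proj_Q (g \<otimes> h) = proj_Q g \<otimes> proj_Q h" if g: "g \<in> carrier G" and h: "h \<in> carrier G" for g h
  proof -
    obtain q1 x1 where 1: "q1 \<in> Q" "x1 \<in> P" "g = q1 \<otimes> x1" using factorization[OF g] by blast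
    obtain q2 x2 where 2: "q2 \<in> Q" "x2 \<in> P" "h = q2 \<otimes> x2" using factorization[OF h] by blast
    have c: "q1 \<in> carrier G" "x1 \<in> carrier G" "q2 \<in> carrier G" "x2 \<in> carrier G"
      using 1 2 Q_carrier P_carrier by auto
    have "(inv q2 \<otimes> x1 \<otimes> q2) \<otimes> x2 \<in> P"
      using subgroup.m_closed[OF P_subgroup normal.inv_op_closed1[OF P_normal c(3) 1(2)] 2(2)] .
    moreover have "q1 \<otimes> q2 \<in> Q" using subgroup.m_closed[OF Q_subgroup 1(1) 2(1)] .
    moreover have "g \<otimes> h = (q1 \<otimes> q2) \<otimes> ((inv q2 \<otimes> x1 \<otimes> q2) \<otimes> x2)"
      using 1 2 c by (simp add: group_word_simps)
    ultimately show ?thesis using proj_Q_eq 1 2 by simp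
  qed
  moreover have "proj_Q g \<in> carrier G" if "g \<in> carrier G" for g
    using factorization[OF that] proj_Q_eq Q_carrier by metis
  ultimately show ?thesis
    by (intro group_hom.intro group_hom_axioms.intro is_group) (auto simp: hom_def)
qed

lemma proj_Q_image: "proj_Q ` carrier G = Q"
proof
  show "proj_Q ` carrier G \<subseteq> Q" using factorization proj_Q_eq by (metis image_subsetI)
  have "proj_Q r = r" if "r \<in> Q" for r
    using proj_Q_eq[OF that subgroup.one_closed[OF P_subgroup]] Q_carrier[OF that] by simp
  then show "Q \<subseteq> proj_Q ` carrier G" using Q_carrier by force
qed

lemma derived_subset_QP: "derived G (carrier G) \<subseteq> derived G Q <#> P"
proof
  fix g assume g: "g \<in> derived G (carrier G)"
  have "derived G Q = proj_Q ` derived G (carrier G)"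
    using group_hom.derived_img[OF proj_Q_hom subset_refl] proj_Q_image by simp
  then have "proj_Q g \<in> derived G Q" using g by simp
  moreover obtain r x where "r \<in> Q" "x \<in> P" "g = r \<otimes> x"
    using factorization derived_in_carrier[OF subset_refl] g by blast
  ultimately show "g \<in> derived G Q <#> P" using proj_Q_eq unfolding set_mult_def by auto
qed

lemma trivial_action_derived:
  assumes triv: "\<forall>x\<in>Q. \<forall>z\<in>P. x \<otimes> z \<otimes> inv x = z"
  shows "derived G (carrier G) = derived G Q"
proof -
  have central: "P \<subseteq> group_center G"
  proof
    fix z assume z: "z \<in> P"
    have "z \<otimes> g = g \<otimes> z" if g: "g \<in> carrier G" for g
    proof -
      obtain r x where r: "r \<in> Q" "x \<in> P" "g = r \<otimes> x" using factorization[OF g] by blast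
      have c: "r \<in> carrier G" "x \<in> carrier G" "z \<in> carrier G" using r z Q_carrier P_carrier by auto
      have rz: "r \<otimes> z = z \<otimes> r" using conj_fixed_iff_commute[OF c(1,3)] triv r(1) z by blast
      have "z \<otimes> g = (z \<otimes> r) \<otimes> x" using r(3) c by (simp add: m_assoc)
      also have "\<dots> = r \<otimes> (z \<otimes> x)" using c by (simp add: rz[symmetric] m_assoc)
      also have "\<dots> = g \<otimes> z" using P_comm[OF z r(2)] r(3) c by (simp add: m_assoc)
      finally show ?thesis .
    qed
    then show "z \<in> group_center G" using P_carrier[OF z] by (simp add: group_center_def)
  qed
  have "derived_set G (carrier G) \<subseteq> derived_set G Q"
  proof
    fix s assume "s \<in> derived_set G (carrier G)"
    then obtain u v where uv: "u \<in> carrier G" "v \<in> carrier G" "s = u \<otimes> v \<otimes> inv u \<otimes> inv v" by blast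
    obtain q1 x1 where 1: "q1 \<in> Q" "x1 \<in> P" "u = q1 \<otimes> x1" using factorization[OF uv(1)] by blast
    obtain q2 x2 where 2: "q2 \<in> Q" "x2 \<in> P" "v = q2 \<otimes> x2" using factorization[OF uv(2)] by blast
    have "s = q1 \<otimes> q2 \<otimes> inv q1 \<otimes> inv q2"
      using commutator_mult_central[OF Q_carrier[OF 1(1)] Q_carrier[OF 2(1)]] central 1 2 uv(3) by blast
    then show "s \<in> derived_set G Q" using 1(1) 2(1) by blast
  qed
  then have "derived G (carrier G) \<subseteq> derived G Q" unfolding derived_def by (rule mono_generate)
  then show ?thesis using mono_derived[OF subgroup.subset[OF Q_subgroup]] by blast
qed

text \<open>If Q acts nontrivially on P, a nontrivial commutator lies in P, so P \<subseteq> G' and G' = Q' P.\<close>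
lemma nontrivial_action_derived:
  assumes act: "\<exists>x\<in>Q. \<exists>z\<in>P. x \<otimes> z \<otimes> inv x \<noteq> z"
  shows "P \<subseteq> derived G (carrier G)" and "derived G (carrier G) = derived G Q <#> P"
proof -
  let ?D = "derived G (carrier G)"
  have D: "subgroup ?D G" by (rule derived_is_subgroup) simp
  obtain x z where x: "x \<in> Q" and z: "z \<in> P" and xz: "x \<otimes> z \<otimes> inv x \<noteq> z" using act by blast
  have c: "x \<in> carrier G" "z \<in> carrier G" using x z Q_carrier P_carrier by auto
  let ?w = "x \<otimes> z \<otimes> inv x \<otimes> inv z"
  have wP: "?w \<in> P"
    using subgroup.m_closed[OF P_subgroup normal.inv_op_closed2[OF P_normal c(1) z]
        subgroup.m_inv_closed[OF P_subgroup z]] .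
  have "?w \<noteq> \<one>" using xz c by (metis inv_closed m_closed inv_equality inv_inv)
  moreover have "?w \<in> ?D" unfolding derived_def using c by (intro generate.incl) blast
  ultimately show PD: "P \<subseteq> ?D" using P_generated[OF wP] generate_subgroup_incl[OF _ D] by blast
  have "derived G Q \<subseteq> ?D" by (rule mono_derived[OF subgroup.subset[OF Q_subgroup]])
  then have "derived G Q <#> P \<subseteq> ?D" using set_mult_subgroup_subset[OF D _ PD] by simp
  then show "?D = derived G Q <#> P" using derived_subset_QP by blast
qed

lemma derived_internal_direct:
  assumes act: "\<exists>x\<in>Q. \<exists>z\<in>P. x \<otimes> z \<otimes> inv x \<noteq> z"
  shows "internal_direct G (derived G (carrier G)) (derived G Q) P"
proof -
  have Q': "subgroup (derived G Q) G" by (rule derived_is_subgroup[OF subgroup.subset[OF Q_subgroup]])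
  have "derived G Q \<inter> P = {\<one>}"
    using derived_incl[OF subset_refl Q_subgroup] Q_inter_P subgroup.one_closed[OF Q']
      subgroup.one_closed[OF P_subgroup] by blast
  then show ?thesis
    unfolding internal_direct_def
    using Q' P_subgroup nontrivial_action_derived(2)[OF act] derived_centralizes_P
      mono_derived[OF subgroup.subset[OF Q_subgroup]] by blast
qed

text \<open>If moreover Q' is cyclic, generated by c, then G' = Q' P is cyclic, generated by c y for
  any generator y of P: the orders of c and y are coprime and c, y commute.\<close>
lemma derived_generated_by_product:
  assumes c: "c \<in> Q" and Q'_gen: "derived G Q = generate G {c}"
    and act: "\<exists>x\<in>Q. \<exists>z\<in>P. x \<otimes> z \<otimes> inv x \<noteq> z"
    and y: "y \<in> P" "y \<noteq> \<one>"
  shows "derived G (carrier G) = generate G {c \<otimes> y}"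
proof
  let ?D = "derived G (carrier G)" and ?S = "generate G {c \<otimes> y}"
  note D_QP = nontrivial_action_derived[OF act]
  have cc: "c \<in> carrier G" and yc: "y \<in> carrier G" using Q_carrier[OF c] P_carrier[OF y(1)] .
  have cD: "c \<in> ?D"
    using mono_derived[OF subgroup.subset[OF Q_subgroup]] Q'_gen generate.incl[of c "{c}" G] by blast
  have cy: "c \<otimes> y = y \<otimes> c" using derived_centralizes_P[OF cD y(1)] .
  have S: "subgroup ?S G" using cc yc by (intro generate_is_subgroup) simp
  have c_pow: "c [^] card Q = \<one>" using ord_dvd_subgroup_card[OF Q_subgroup c] pow_eq_id[OF cc] by blast
  have y_pow: "y [^] p = \<one>" using ord_dvd_subgroup_card[OF P_subgroup y(1)] pow_eq_id[OF yc] P_card by simp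
  have nonzero: "p \<noteq> 0" "card Q \<noteq> 0" using p_prime q_prime Q_card by auto
  have "c \<in> ?S" by (rule commuting_coprime_generate[OF cc yc cy c_pow y_pow coprime_Q_P nonzero(1)])
  then have "derived G Q \<subseteq> ?S" using Q'_gen generate_subgroup_incl[OF _ S, of "{c}"] by simp
  moreover have "y \<in> ?S" using commuting_coprime_generate[OF yc cc cy[symmetric] y_pow c_pow _ nonzero(2)]
      coprime_Q_P cy by (simp add: coprime_commute)
  then have "P \<subseteq> ?S" using P_generated[OF y] generate_subgroup_incl[OF _ S, of "{y}"] by simp
  ultimately show "?D \<subseteq> ?S" using D_QP(2) set_mult_subgroup_subset[OF S] by simp
  have "c \<otimes> y \<in> ?D" using D_QP(1) y(1) cD subgroup.m_closed[OF derived_is_subgroup[OF subset_refl]] by blast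
  then show "?S \<subseteq> ?D" by (intro generate_subgroup_incl[OF _ derived_is_subgroup]) auto
qed

text \<open>A trivial action would give G' = Q', a cyclic
  q-group, and an abelian Q would give G' = P, cyclic of order p.\<close>
theorem derived_structure:
  assumes c: "c \<in> Q" and Q'_gen: "derived G Q = generate G {c}"
    and not_cyclic_pp: "\<not> (cyclic_group (subgroup_generated G (derived G (carrier G)))
            \<and> (\<exists>q k. Factorial_Ring.prime (q::nat) \<and> card (derived G (carrier G)) = q ^ k))"
  shows "(\<exists>x\<in>Q. \<exists>y\<in>Q. x \<otimes> y \<noteq> y \<otimes> x)
    \<and> (\<exists>x\<in>Q. \<exists>y\<in>P. x \<otimes> y \<otimes> inv x \<noteq> y)
    \<and> internal_direct G (derived G (carrier G)) (derived G Q) P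
    \<and> cyclic_group (subgroup_generated G (derived G (carrier G)))"
proof -
  let ?D = "derived G (carrier G)"
  have cc: "c \<in> carrier G" using Q_carrier[OF c] .
  have act: "\<exists>x\<in>Q. \<exists>z\<in>P. x \<otimes> z \<otimes> inv x \<noteq> z"
  proof (rule ccontr)
    assume "\<not> ?thesis"
    then have D_eq: "?D = generate G {c}" using trivial_action_derived Q'_gen by blast
    have "ord c dvd q ^ k" using ord_dvd_subgroup_card[OF Q_subgroup c] Q_card by simp
    then obtain j where "card ?D = q ^ j"
      using D_eq generate_pow_card[OF cc] divides_primepow_nat[OF q_prime] by auto
    then show False using not_cyclic_pp D_eq cyclic_subgroup_generated[OF cc] q_prime by auto
  qed
  obtain y where y: "y \<in> P" "y \<noteq> \<one>" using P_nontrivial by blast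
  have cyclic: "cyclic_group (subgroup_generated G ?D)"
    using derived_generated_by_product[OF c Q'_gen act y] cyclic_subgroup_generated cc P_carrier[OF y(1)]
    by simp
  have "\<exists>x\<in>Q. \<exists>y\<in>Q. x \<otimes> y \<noteq> y \<otimes> x"
  proof (rule ccontr)
    assume "\<not> ?thesis"
    then have "derived G Q = {\<one>}" using derived_of_commuting_set subgroup.subset[OF Q_subgroup] by blast
    then have "?D = P" using nontrivial_action_derived(2)[OF act] P_carrier unfolding set_mult_def by force
    then show False using not_cyclic_pp cyclic P_card p_prime power_one_right by metis
  qed
  then show ?thesis using act cyclic derived_internal_direct[OF act] by blast
qed
end

lemma multiplicity_prime_power_times:
  assumes q: "Factorial_Ring.prime (q::nat)" and m: "\<not> q dvd m"
  shows "multiplicity q (q ^ k * m) = k"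
proof -
  have "m \<noteq> 0" using m by (metis dvd_0_right)
  then have "multiplicity q (q ^ k * m) = multiplicity q (q ^ k) + multiplicity q m"
    using q by (intro prime_elem_multiplicity_mult_distrib) auto
  then show ?thesis using q m by (simp add: not_dvd_imp_multiplicity_0)
qed

lemma multiplicities_16p:
  assumes p: "Factorial_Ring.prime (p::nat)" and odd: "odd p"
  shows "multiplicity p (16 * p) = 1" and "multiplicity 2 (16 * p) = 4"
proof -
  have "\<not> p dvd 2" using prime_ge_2_nat[OF p] odd by (auto dest: dvd_imp_le)
  then have "\<not> p dvd 2 ^ 4" using prime_dvd_power[OF p] by blast
  then show "multiplicity p (16 * p) = 1"
    using multiplicity_prime_power_times[OF p, of "2 ^ 4" 1] by (simp add: mult.commute)
  show "multiplicity 2 (16 * p) = 4"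
    using multiplicity_prime_power_times[OF two_is_prime_nat, of p 4] odd by simp
qed

theorem mainTheorem11:
  fixes G (structure) and p :: nat and P Q :: "'a set"
  assumes "group G" and "finite (carrier G)"
    and "Factorial_Ring.prime p" and "odd p" and "order G = 16 * p"
    and "sylow_subgroup G p P" and "P \<lhd> G"
    and "sylow_subgroup G 2 Q"
  shows "internal_semidirect G Q P
    \<and> (\<not> (cyclic_group (subgroup_generated G (derived G (carrier G)))
            \<and> (\<exists>q k. Factorial_Ring.prime (q::nat) \<and> card (derived G (carrier G)) = q ^ k))
       \<longrightarrow> (\<exists>x\<in>Q. \<exists>y\<in>Q. x \<otimes> y \<noteq> y \<otimes> x)
         \<and> (\<exists>x\<in>Q. \<exists>y\<in>P. x \<otimes> y \<otimes> inv x \<noteq> y)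
         \<and> internal_direct G (derived G (carrier G)) (derived G Q) P
         \<and> cyclic_group (subgroup_generated G (derived G (carrier G))))"
proof -
  interpret group G by fact
  have P_card: "card P = p" and Q_card: "card Q = 2 ^ 4" and Q: "subgroup Q G"
    using assms(5,6,8) multiplicities_16p[OF assms(3,4)] by (simp_all add: sylow_subgroup_def)
  interpret prime_normal_complement G p 2 4 P Q
    using assms P_card Q_card Q
    by (intro prime_normal_complement.intro prime_normal_complement_axioms.intro) auto
  obtain c where "c \<in> Q" "derived G Q = generate G {c}"
    using subgroup_order_16_derived_cyclic[OF Q] Q_card by auto
  then show ?thesis using semidirect derived_structure by blast
qed

end
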